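(* Consider the model $X\sim\mathbb{P}^X$, $\mu\mid X\sim N(m(X),A)$, $Z\mid\mu\sim N(\mu,\sigma^2)$ with $A\ge0$, $\sigma>0$, and let $(X_{n+1},\mu_{n+1},Z_{n+1})$ be a draw from it. Fix any deterministic function $\tilde m:\mathcal{X}\to\mathbb{R}$ and define $A_{\tilde m}:=\mathbb{E}_{m,A}[(\tilde m(X_{n+1})-Z_{n+1})^2]-\sigma^2$. Then $$\mathbb{E}_{m,A}\big[(t^*_{\tilde m,A_{\tilde m}}(X_{n+1},Z_{n+1})-\mu_{n+1})^2\big]=\inf_{\tilde A\ge0}\mathbb{E}_{m,A}\big[(t^*_{\tilde m,\tilde A}(X_{n+1},Z_{n+1})-\mu_{n+1})^2\big]=\frac{\sigma^2A_{\tilde m}}{\sigma^2+A_{\tilde m}}.$$ In particular, $\mathbb{E}_{m,A}[(t^*_{\tilde m,A_{\tilde m}}(X_{n+1},Z_{n+1})-\mu_{n+1})^2]\le\mathbb{E}_{m,A}[(t^*_{\tilde m,A}(X_{n+1},Z_{n+1})-\mu_{n+1})^2]$.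
   Context: For a function $\tilde m$ and $\tilde A\ge0$, $t^*_{\tilde m,\tilde A}(x,z)=\frac{\tilde A}{\sigma^2+\tilde A}z+\frac{\sigma^2}{\sigma^2+\tilde A}\tilde m(x)$. *)

theory Defs
  imports "HOL-Probability.Probability"
begin

definition tstar :: "real \<Rightarrow> ('x \<Rightarrow> real) \<Rightarrow> real \<Rightarrow> 'x \<Rightarrow> real \<Rightarrow> real" where
  "tstar \<sigma> mt At x z = At / (\<sigma>\<^sup>2 + At) * z + \<sigma>\<^sup>2 / (\<sigma>\<^sup>2 + At) * mt x"

definition std_normal :: "real measure" where
  "std_normal = density lborel std_normal_density"

text \<open>Underlying probability space of the model: (X, xi, eta) with X ~ P^X and xi, eta i.i.d. N(0,1),
  independent of X. Then mu = m(X) + sqrt A * xi satisfies mu | X ~ N(m(X), A) (degenerate if A = 0)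
  and Z = mu + sigma * eta satisfies Z | mu ~ N(mu, sigma^2).\<close>
definition model_space :: "'x measure \<Rightarrow> ('x \<times> real \<times> real) measure" where
  "model_space PX = PX \<Otimes>\<^sub>M (std_normal \<Otimes>\<^sub>M std_normal)"

definition model_X :: "'x \<times> real \<times> real \<Rightarrow> 'x" where
  "model_X \<omega> = fst \<omega>"

definition model_mu :: "('x \<Rightarrow> real) \<Rightarrow> real \<Rightarrow> 'x \<times> real \<times> real \<Rightarrow> real" where
  "model_mu m A \<omega> = m (fst \<omega>) + sqrt A * fst (snd \<omega>)"

definition model_Z :: "('x \<Rightarrow> real) \<Rightarrow> real \<Rightarrow> real \<Rightarrow> 'x \<times> real \<times> real \<Rightarrow> real" where
  "model_Z m A \<sigma> \<omega> = model_mu m A \<omega> + \<sigma> * snd (snd \<omega>)"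

definition model_expect ::
  "'x measure \<Rightarrow> ('x \<Rightarrow> real) \<Rightarrow> real \<Rightarrow> real \<Rightarrow> ('x \<Rightarrow> real \<Rightarrow> real \<Rightarrow> real) \<Rightarrow> real" where
  "model_expect PX m A \<sigma> g =
     (\<integral>\<omega>. g (model_X \<omega>) (model_mu m A \<omega>) (model_Z m A \<sigma> \<omega>) \<partial>model_space PX)"

end

theory Submission imports Defs begin

(* Write \<mu> - m(X) = sqrt A * \<xi> and Z - \<mu> = \<sigma> * \<eta> with standard normals \<xi>, \<eta> independent of
   each other and of X. For c = \<sigma>^2 / (\<sigma>^2 + At) the error of the estimator is
   c (mt(X) - m(X)) - c sqrt A \<xi> + (1 - c) \<sigma> \<eta>, a sum of uncorrelated terms, so its mean square is
   c^2 Amt + (1 - c)^2 \<sigma>^2, where Amt = E (mt(X) - m(X))^2 + A by the same decomposition of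
   mt(X) - Z. As a function of c this is minimised at c = \<sigma>^2 / (\<sigma>^2 + Amt), i.e. at At = Amt,
   with minimum \<sigma>^2 Amt / (\<sigma>^2 + Amt). *)

lemma
  fixes f :: "'a \<Rightarrow> real" and g :: "'b \<Rightarrow> real"
  assumes "sigma_finite_measure M1" and "sigma_finite_measure M2"
    and f: "integrable M1 f" and g: "integrable M2 g"
  shows integrable_pair_measure_mult: "integrable (M1 \<Otimes>\<^sub>M M2) (\<lambda>\<omega>. f (fst \<omega>) * g (snd \<omega>))"
    and integral_pair_measure_mult:
      "(\<integral>\<omega>. f (fst \<omega>) * g (snd \<omega>) \<partial>(M1 \<Otimes>\<^sub>M M2)) = integral\<^sup>L M1 f * integral\<^sup>L M2 g"
proof -
  interpret M2: sigma_finite_measure M2 by fact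
  interpret pair_sigma_finite M1 M2 by (simp add: assms pair_sigma_finite_def)
  have [measurable]: "f \<in> borel_measurable M1" "g \<in> borel_measurable M2"
    using f g by auto
  have "(\<integral>\<^sup>+ \<omega>. ennreal (norm (f (fst \<omega>) * g (snd \<omega>))) \<partial>(M1 \<Otimes>\<^sub>M M2))
      = (\<integral>\<^sup>+ x. \<integral>\<^sup>+ y. ennreal (norm (f x)) * ennreal (norm (g y)) \<partial>M2 \<partial>M1)"
    by (subst M2.nn_integral_fst[symmetric]) (auto simp: abs_mult ennreal_mult)
  also have "\<dots> = (\<integral>\<^sup>+ x. ennreal (norm (f x)) \<partial>M1) * (\<integral>\<^sup>+ y. ennreal (norm (g y)) \<partial>M2)"
    by (simp add: nn_integral_cmult nn_integral_multc)
  also have "\<dots> < \<infinity>"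
    using f g unfolding integrable_iff_bounded by (simp add: ennreal_mult_less_top)
  finally show int: "integrable (M1 \<Otimes>\<^sub>M M2) (\<lambda>\<omega>. f (fst \<omega>) * g (snd \<omega>))"
    unfolding integrable_iff_bounded by simp
  show "(\<integral>\<omega>. f (fst \<omega>) * g (snd \<omega>) \<partial>(M1 \<Otimes>\<^sub>M M2)) = integral\<^sup>L M1 f * integral\<^sup>L M2 g"
    using integral_fst'[OF int] by simp
qed

lemma has_bochner_integral_pair_measure_square_add:
  fixes u :: "'a \<Rightarrow> real" and v :: "'b \<Rightarrow> real"
  assumes M: "prob_space M" and N: "prob_space N"
    and u: "u \<in> borel_measurable M" "integrable M (\<lambda>x. (u x)\<^sup>2)"
    and v: "v \<in> borel_measurable N" "integrable N (\<lambda>y. (v y)\<^sup>2)" "integral\<^sup>L N v = 0"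
  shows "has_bochner_integral (M \<Otimes>\<^sub>M N) (\<lambda>\<omega>. (u (fst \<omega>) + v (snd \<omega>))\<^sup>2)
           (integral\<^sup>L M (\<lambda>x. (u x)\<^sup>2) + integral\<^sup>L N (\<lambda>y. (v y)\<^sup>2))"
proof -
  interpret M: prob_space M by fact
  interpret N: prob_space N by fact
  have sf: "sigma_finite_measure M" "sigma_finite_measure N" by unfold_locales
  have u1: "integrable M u" and v1: "integrable N v"
    using M.square_integrable_imp_integrable N.square_integrable_imp_integrable u v by auto
  note int = integrable_pair_measure_mult[OF sf] and eq = integral_pair_measure_mult[OF sf]
  have uu: "has_bochner_integral (M \<Otimes>\<^sub>M N) (\<lambda>\<omega>. (u (fst \<omega>))\<^sup>2 * 1) (integral\<^sup>L M (\<lambda>x. (u x)\<^sup>2))"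
    using int[OF u(2), of "\<lambda>_. 1"] eq[OF u(2), of "\<lambda>_. 1"]
    by (simp add: has_bochner_integral_iff N.prob_space)
  have vv: "has_bochner_integral (M \<Otimes>\<^sub>M N) (\<lambda>\<omega>. 1 * (v (snd \<omega>))\<^sup>2) (integral\<^sup>L N (\<lambda>y. (v y)\<^sup>2))"
    using int[of "\<lambda>_. 1", OF _ v(2)] eq[of "\<lambda>_. 1", OF _ v(2)]
    by (simp add: has_bochner_integral_iff M.prob_space)
  have uv: "has_bochner_integral (M \<Otimes>\<^sub>M N) (\<lambda>\<omega>. u (fst \<omega>) * v (snd \<omega>)) 0"
    using int[OF u1 v1] eq[OF u1 v1] v(3) by (simp add: has_bochner_integral_iff)
  have "has_bochner_integral (M \<Otimes>\<^sub>M N)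
      (\<lambda>\<omega>. (u (fst \<omega>))\<^sup>2 * 1 + 1 * (v (snd \<omega>))\<^sup>2 + 2 * (u (fst \<omega>) * v (snd \<omega>)))
      (integral\<^sup>L M (\<lambda>x. (u x)\<^sup>2) + integral\<^sup>L N (\<lambda>y. (v y)\<^sup>2) + 2 * 0)"
    by (intro has_bochner_integral_add has_bochner_integral_mult_right uu vv uv)
  then show ?thesis
    by (simp add: power2_sum mult.assoc)
qed

lemma prob_space_std_normal: "prob_space std_normal"
  unfolding std_normal_def using prob_space_normal_density[of 1 0] by simp

lemma integrable_std_normal_power: "integrable std_normal (\<lambda>x. x ^ k)"
  unfolding std_normal_def
  by (subst integrable_density) (auto intro: integrable_std_normal_moment)

lemma integral_std_normal_id: "(\<integral>x. x \<partial>std_normal) = 0"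
  unfolding std_normal_def
  using integral_std_normal_moment_odd[of 0] by (subst integral_density) auto

lemma integral_std_normal_square: "(\<integral>x. x\<^sup>2 \<partial>std_normal) = 1"
  unfolding std_normal_def
  using integral_std_normal_moment_even[of 1] by (subst integral_density) auto

lemma
  shows has_bochner_integral_std_normal_pair_combination_square:
      "has_bochner_integral (std_normal \<Otimes>\<^sub>M std_normal) (\<lambda>p. (a * fst p + b * snd p)\<^sup>2) (a\<^sup>2 + b\<^sup>2)"
    and has_bochner_integral_std_normal_pair_combination:
      "has_bochner_integral (std_normal \<Otimes>\<^sub>M std_normal) (\<lambda>p. a * fst p + b * snd p) 0"
proof -
  have N: "sigma_finite_measure std_normal"
    using prob_space_std_normal by (simp add: prob_space_imp_sigma_finite)
  have N1: "integrable std_normal (\<lambda>x. c * x)" for c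
    using integrable_std_normal_power[of 1] by simp
  have N0: "integrable std_normal (\<lambda>x. 1::real)"
    using prob_space_std_normal by (simp add: prob_space.finite_measure finite_measure.integrable_const)
  show "has_bochner_integral (std_normal \<Otimes>\<^sub>M std_normal) (\<lambda>p. (a * fst p + b * snd p)\<^sup>2) (a\<^sup>2 + b\<^sup>2)"
    using has_bochner_integral_pair_measure_square_add[OF prob_space_std_normal prob_space_std_normal,
        of "\<lambda>x. a * x" "\<lambda>y. b * y"] borel_measurable_integrable[OF N1]
      integrable_std_normal_power[of 2]
    by (simp add: power_mult_distrib integral_std_normal_square integral_std_normal_id)
  have "has_bochner_integral (std_normal \<Otimes>\<^sub>M std_normal)
      (\<lambda>p. a * fst p * 1 + 1 * (b * snd p)) (a * 0 * 1 + 1 * (b * 0))"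
    using integrable_pair_measure_mult[OF N N, OF N1 N0] integral_pair_measure_mult[OF N N, OF N1 N0]
      integrable_pair_measure_mult[OF N N, OF N0 N1] integral_pair_measure_mult[OF N N, OF N0 N1]
    by (intro has_bochner_integral_add)
      (auto simp: has_bochner_integral_iff integral_std_normal_id prob_space.prob_space[OF prob_space_std_normal])
  then show "has_bochner_integral (std_normal \<Otimes>\<^sub>M std_normal) (\<lambda>p. a * fst p + b * snd p) 0"
    by simp
qed

lemma model_expect_square_error:
  fixes u :: "'x \<Rightarrow> real"
  assumes PX: "prob_space PX" and "A \<ge> 0"
    and u: "u \<in> borel_measurable PX" "integrable PX (\<lambda>x. (u x)\<^sup>2)"
  shows "model_expect PX m A \<sigma> (\<lambda>x \<mu> z. (u x + a * (\<mu> - m x) + b * (z - \<mu>))\<^sup>2)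
         = integral\<^sup>L PX (\<lambda>x. (u x)\<^sup>2) + a\<^sup>2 * A + b\<^sup>2 * \<sigma>\<^sup>2"
proof -
  let ?v = "\<lambda>p. (a * sqrt A) * fst p + (b * \<sigma>) * snd p"
  note v_sq = has_bochner_integral_std_normal_pair_combination_square[of "a * sqrt A" "b * \<sigma>"]
  note v_mean = has_bochner_integral_std_normal_pair_combination[of "a * sqrt A" "b * \<sigma>"]
  have "has_bochner_integral (model_space PX) (\<lambda>\<omega>. (u (fst \<omega>) + ?v (snd \<omega>))\<^sup>2)
      (integral\<^sup>L PX (\<lambda>x. (u x)\<^sup>2) + (a * sqrt A)\<^sup>2 + (b * \<sigma>)\<^sup>2)"
    unfolding model_space_def
    using has_bochner_integral_pair_measure_square_add[OF PX _ u, of _ ?v] v_sq v_mean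
      prob_space_pair[OF prob_space_std_normal prob_space_std_normal]
    by (auto simp: has_bochner_integral_iff)
  then have "(\<integral>\<omega>. (u (fst \<omega>) + ?v (snd \<omega>))\<^sup>2 \<partial>model_space PX)
      = integral\<^sup>L PX (\<lambda>x. (u x)\<^sup>2) + a\<^sup>2 * A + b\<^sup>2 * \<sigma>\<^sup>2"
    using \<open>A \<ge> 0\<close> by (simp add: power_mult_distrib has_bochner_integral_integral_eq)
  then show ?thesis
    unfolding model_expect_def model_X_def model_Z_def model_mu_def
    by (simp add: algebra_simps)
qed

(* Mean squared error of t* with weight parameter t, noise variance s and B the mean squared
   error of the prior guess mt(X) for \<mu>. *)
definition shrinkage_risk :: "real \<Rightarrow> real \<Rightarrow> real \<Rightarrow> real" where
  "shrinkage_risk s B t = (s / (s + t))\<^sup>2 * B + (t / (s + t))\<^sup>2 * s"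

lemma shrinkage_risk_optimum:
  fixes s B :: real
  assumes "s > 0" "B \<ge> 0"
  shows "shrinkage_risk s B B = s * B / (s + B)"
proof -
  have "s + B \<noteq> 0" using assms by simp
  then show ?thesis
    by (simp add: shrinkage_risk_def power_divide divide_simps) (simp add: algebra_simps power2_eq_square)
qed

lemma shrinkage_risk_ge_optimum:
  fixes s B t :: real
  assumes "s > 0" "B \<ge> 0" "t \<ge> 0"
  shows "shrinkage_risk s B B \<le> shrinkage_risk s B t"
proof -
  have nz: "s + t \<noteq> 0" "s + B \<noteq> 0" using assms by simp_all
  have "shrinkage_risk s B t - shrinkage_risk s B B = s\<^sup>2 * (t - B)\<^sup>2 / ((s + t)\<^sup>2 * (s + B))"
    using nz by (simp add: shrinkage_risk_def power_divide divide_simps)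
      (simp add: algebra_simps power2_eq_square)
  also have "\<dots> \<ge> 0"
    using assms by simp
  finally show ?thesis by simp
qed

lemma model_expect_residual_square:
  assumes "prob_space PX" "A \<ge> 0"
    and "(\<lambda>x. mt x - m x) \<in> borel_measurable PX" "integrable PX (\<lambda>x. (mt x - m x)\<^sup>2)"
  shows "model_expect PX m A \<sigma> (\<lambda>x \<mu> z. (mt x - z)\<^sup>2)
         = integral\<^sup>L PX (\<lambda>x. (mt x - m x)\<^sup>2) + A + \<sigma>\<^sup>2"
proof -
  have "(mt x - z)\<^sup>2 = ((mt x - m x) + (-1) * (\<mu> - m x) + (-1) * (z - \<mu>))\<^sup>2" for x \<mu> z
    by (simp add: algebra_simps)
  then show ?thesis
    using model_expect_square_error[OF assms, of m \<sigma> "-1" "-1"] by simp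
qed

lemma model_expect_tstar_square_error:
  assumes "prob_space PX" "A \<ge> 0" "\<sigma> > 0" "At \<ge> 0"
    and um: "(\<lambda>x. mt x - m x) \<in> borel_measurable PX" and ui: "integrable PX (\<lambda>x. (mt x - m x)\<^sup>2)"
  shows "model_expect PX m A \<sigma> (\<lambda>x \<mu> z. (tstar \<sigma> mt At x z - \<mu>)\<^sup>2)
         = shrinkage_risk (\<sigma>\<^sup>2) (integral\<^sup>L PX (\<lambda>x. (mt x - m x)\<^sup>2) + A) At"
proof -
  define c where "c = \<sigma>\<^sup>2 / (\<sigma>\<^sup>2 + At)"
  define w where "w = At / (\<sigma>\<^sup>2 + At)"
  have "\<sigma>\<^sup>2 + At > 0" using assms(3,4) by (simp add: add_pos_nonneg)
  then have cw: "c + w = 1" by (simp add: c_def w_def add_divide_distrib[symmetric])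
  have "(tstar \<sigma> mt At x z - \<mu>)\<^sup>2 = (c * (mt x - m x) + (- c) * (\<mu> - m x) + w * (z - \<mu>))\<^sup>2"
    for x \<mu> z
  proof -
    have "tstar \<sigma> mt At x z - \<mu> = w * z + c * mt x - (c + w) * \<mu>"
      unfolding tstar_def c_def[symmetric] w_def[symmetric] cw by simp
    also have "\<dots> = c * (mt x - m x) + (- c) * (\<mu> - m x) + w * (z - \<mu>)"
      by (simp add: algebra_simps)
    finally show ?thesis by simp
  qed
  moreover have "model_expect PX m A \<sigma> (\<lambda>x \<mu> z. (c * (mt x - m x) + (- c) * (\<mu> - m x) + w * (z - \<mu>))\<^sup>2)
      = c\<^sup>2 * (integral\<^sup>L PX (\<lambda>x. (mt x - m x)\<^sup>2) + A) + w\<^sup>2 * \<sigma>\<^sup>2"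
  proof -
    have "(\<lambda>x. c * (mt x - m x)) \<in> borel_measurable PX"
      using um by simp
    moreover have "integrable PX (\<lambda>x. (c * (mt x - m x))\<^sup>2)"
      using ui by (simp add: power_mult_distrib)
    ultimately show ?thesis
      using model_expect_square_error[OF assms(1,2), of "\<lambda>x. c * (mt x - m x)" m \<sigma> "- c" w]
      by (simp add: power_mult_distrib distrib_left)
  qed
  ultimately show ?thesis
    by (simp add: shrinkage_risk_def c_def w_def)
qed

theorem proposition1:
  fixes PX :: "'x measure" and m mt :: "'x \<Rightarrow> real" and A \<sigma> :: real
  assumes "prob_space PX"
    and "A \<ge> 0" and "\<sigma> > 0"
    and "m \<in> borel_measurable PX" and "mt \<in> borel_measurable PX"
    and "integrable PX (\<lambda>x. (mt x - m x)\<^sup>2)"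
  defines "Amt \<equiv> model_expect PX m A \<sigma> (\<lambda>x \<mu> z. (mt x - z)\<^sup>2) - \<sigma>\<^sup>2"
  shows "model_expect PX m A \<sigma> (\<lambda>x \<mu> z. (tstar \<sigma> mt Amt x z - \<mu>)\<^sup>2)
           = (INF At\<in>{0..}. model_expect PX m A \<sigma> (\<lambda>x \<mu> z. (tstar \<sigma> mt At x z - \<mu>)\<^sup>2))
       \<and> (INF At\<in>{0..}. model_expect PX m A \<sigma> (\<lambda>x \<mu> z. (tstar \<sigma> mt At x z - \<mu>)\<^sup>2))
           = \<sigma>\<^sup>2 * Amt / (\<sigma>\<^sup>2 + Amt)
       \<and> model_expect PX m A \<sigma> (\<lambda>x \<mu> z. (tstar \<sigma> mt Amt x z - \<mu>)\<^sup>2)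
           \<le> model_expect PX m A \<sigma> (\<lambda>x \<mu> z. (tstar \<sigma> mt A x z - \<mu>)\<^sup>2)"
proof -
  define U where "U = integral\<^sup>L PX (\<lambda>x. (mt x - m x)\<^sup>2)"
  have um: "(\<lambda>x. mt x - m x) \<in> borel_measurable PX"
    using assms(4,5) by simp
  have "Amt = U + A"
    using model_expect_residual_square[OF assms(1,2) um assms(6)] by (simp add: Amt_def U_def)
  moreover have "U \<ge> 0"
    unfolding U_def by (rule integral_nonneg_AE) simp
  ultimately have Amt_nonneg: "Amt \<ge> 0"
    using assms(2) by simp
  define f where "f At = model_expect PX m A \<sigma> (\<lambda>x \<mu> z. (tstar \<sigma> mt At x z - \<mu>)\<^sup>2)" for At
  have f_eq: "f At = shrinkage_risk (\<sigma>\<^sup>2) Amt At" if "At \<ge> 0" for At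
    using model_expect_tstar_square_error[OF assms(1-3) that um assms(6)] \<open>Amt = U + A\<close>
    by (simp add: f_def U_def)
  have f_min: "f Amt \<le> f At" if "At \<ge> 0" for At
    using shrinkage_risk_ge_optimum[of "\<sigma>\<^sup>2" Amt At] assms(3) Amt_nonneg that
    by (simp add: f_eq)
  have "(INF At\<in>{0..}. f At) = f Amt"
    using Amt_nonneg f_min by (intro cInf_eq_minimum) auto
  moreover have "f Amt = \<sigma>\<^sup>2 * Amt / (\<sigma>\<^sup>2 + Amt)"
    using shrinkage_risk_optimum[of "\<sigma>\<^sup>2" Amt] assms(3) Amt_nonneg by (simp add: f_eq)
  ultimately show ?thesis
    using f_min[OF assms(2)] unfolding f_def by simp
qed

end
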